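(* For every $t=0,1,\dots,T-2$, $H_t(\bar I_t-\theta)>H_t(I_t)+K_t$.
   Context: Model. Fix an integer horizon $T\ge 2$, a discount factor $\alpha\in(0,1]$, and for $t=0,\dots,T-1$: unit ordering costs $c_t\in\mathbb R$, a salvage coefficient $c_T\in\mathbb R$, setup costs $K_t\ge 0$, functions $G_t:\mathbb R\to\mathbb R$, and independent nonnegative random demands $D_0,\dots,D_{T-1}$ with right-continuous distribution functions $F_t$ and finite means; all expectations appearing are assumed finite. Put $C_t(y)=(c_t-\alpha c_{t+1})y+G_t(y)+\alpha c_{t+1}E[D_t]$. Standing assumptions: (i) each $C_t$ is convex with $C_t(y)\to+\infty$ as $|y|\to\infty$; (ii) $K_t\ge \alpha K_{t+1}$ for $t=0,\dots,T-2$. Grid construction. Fix $\theta>0$, $z_m=m\theta$, $Z_\theta=\{z_m:m\in\mathbb Z\}$, $f_t(n)=F_t(z_{n+1})-F_t(z_n)$ ($n\ge -1$). $C^m_t=\min\{y: C_t(y)=\min_x C_t(x)\}$; with $z_{n_0}<C^m_t\le z_{n_0+1}$, $S^U_t=\min\{z_m\in Z_\theta: z_m\ge C^m_t,\ C_t(z_m)>C_t(z_{n_0})+K_t\}$. $s_{T-1}$ is a point with $s_{T-1}\le C^m_{T-1}$, $C_{T-1}(s_{T-1})=C_{T-1}(C^m_{T-1})+K_{T-1}$; $\bar I_{T-1}=s_{T-1}$. For $t=T-2,\dots,0$: $I_t=\max\{z_m\in Z_\theta: z_m<\min(\bar I_{t+1}-\theta,C^m_t)\}$, $\bar I_t=\max\{z_m\in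 Z_\theta: z_m\le I_t,\ C_t(z_m)>C_t(I_t)+K_t\}+\theta$. $H_{T-1}=C_{T-1}$, $S_{T-1}=C^m_{T-1}$; $V_t(y)=H_t(S_t)+K_t$ for $y<s_t$, $V_t(y)=H_t(y)$ for $y\ge s_t$. For $t=T-2,\dots,0$: $H_t(y)=C_t(y)+\alpha\sum_{n=-1}^\infty V_{t+1}(y-z_n)f_t(n)$; $S_t=\max\{z_m\in Z_\theta: I_t\le z_m\le S^U_t,\ H_t(z_m)=\min\{H_t(z_n):z_n\in Z_\theta, I_t\le z_n\le S^U_t\}\}$; $s_t=S_t$ if $K_t=0$, else $s_t=\min\{z_m\in Z_\theta:\bar I_t\le z_m\le S_t,\ H_t(z_m)\le H_t(S_t)+K_t\}$. *)

theory Defs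
  imports "HOL-Probability.Probability"
begin

text \<open>Single-period cost C_t(y) = (c_t - alpha c_{t+1}) y + G_t(y) + alpha c_{t+1} E[D_t].
  The demand D_t is represented by its distribution, a real measure; c T is the salvage coefficient.\<close>
definition Cfun :: "real \<Rightarrow> (nat \<Rightarrow> real) \<Rightarrow> (nat \<Rightarrow> real \<Rightarrow> real) \<Rightarrow> (nat \<Rightarrow> real measure)
    \<Rightarrow> nat \<Rightarrow> real \<Rightarrow> real" where
  "Cfun \<alpha> c G D t y = (c t - \<alpha> * c (Suc t)) * y + G t y + \<alpha> * c (Suc t) * (\<integral>x. x \<partial>(D t))"

definition grid :: "real \<Rightarrow> real set" where
  "grid \<theta> = {of_int m * \<theta> | m. True}"

definition CM :: "(nat \<Rightarrow> real \<Rightarrow> real) \<Rightarrow> nat \<Rightarrow> real" where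
  "CM C t = (LEAST y. \<forall>x. C t y \<le> C t x)"

definition gbelow :: "real \<Rightarrow> real \<Rightarrow> real" where
  "gbelow \<theta> a = (GREATEST z. z \<in> grid \<theta> \<and> z < a)"

text \<open>S^U_t (note z_{n0} = gbelow theta (CM C t)).\<close>
definition SU :: "(nat \<Rightarrow> real \<Rightarrow> real) \<Rightarrow> (nat \<Rightarrow> real) \<Rightarrow> real \<Rightarrow> nat \<Rightarrow> real" where
  "SU C K \<theta> t = (LEAST z. z \<in> grid \<theta> \<and> z \<ge> CM C t \<and> C t z > C t (gbelow \<theta> (CM C t)) + K t)"

definition sLast :: "(nat \<Rightarrow> real \<Rightarrow> real) \<Rightarrow> (nat \<Rightarrow> real) \<Rightarrow> nat \<Rightarrow> real" where
  "sLast C K T = (SOME s. s \<le> CM C (T - 1) \<and> C (T - 1) s = C (T - 1) (CM C (T - 1)) + K (T - 1))"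

definition fmass :: "(nat \<Rightarrow> real measure) \<Rightarrow> real \<Rightarrow> nat \<Rightarrow> int \<Rightarrow> real" where
  "fmass D \<theta> t n = measure (D t) {..of_int (n + 1) * \<theta>} - measure (D t) {..of_int n * \<theta>}"

record stage =
  stH :: "real \<Rightarrow> real"
  stS :: real
  sts :: real
  stIbar :: real
  stI :: real

text \<open>Backward recursion: stage k describes period t = T - 1 - k.\<close>
fun stg :: "(nat \<Rightarrow> real \<Rightarrow> real) \<Rightarrow> (nat \<Rightarrow> real) \<Rightarrow> real \<Rightarrow> real \<Rightarrow> (nat \<Rightarrow> real measure)
    \<Rightarrow> nat \<Rightarrow> nat \<Rightarrow> stage" where
  "stg C K \<alpha> \<theta> D T 0 =
     \<lparr> stH = C (T - 1), stS = CM C (T - 1), sts = sLast C K T, stIbar = sLast C K T, stI = undefined \<rparr>"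
| "stg C K \<alpha> \<theta> D T (Suc k) =
     (let p = stg C K \<alpha> \<theta> D T k;
          t = T - 2 - k;
          I = gbelow \<theta> (min (stIbar p - \<theta>) (CM C t));
          Ibar = (GREATEST z. z \<in> grid \<theta> \<and> z \<le> I \<and> C t z > C t I + K t) + \<theta>;
          V = (\<lambda>y. if y < sts p then stH p (stS p) + K (Suc t) else stH p y);
          H = (\<lambda>y. C t y + \<alpha> * (\<Sum>j. V (y - of_int (int j - 1) * \<theta>) * fmass D \<theta> t (int j - 1)));
          S = (GREATEST z. z \<in> grid \<theta> \<and> I \<le> z \<and> z \<le> SU C K \<theta> t \<and>
                 (\<forall>w. w \<in> grid \<theta> \<and> I \<le> w \<and> w \<le> SU C K \<theta> t \<longrightarrow> H z \<le> H w));
          s = (if K t = 0 then S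
               else (LEAST z. z \<in> grid \<theta> \<and> Ibar \<le> z \<and> z \<le> S \<and> H z \<le> H S + K t))
      in \<lparr> stH = H, stS = S, sts = s, stIbar = Ibar, stI = I \<rparr>)"

definition Hf where "Hf C K \<alpha> \<theta> D T t = stH (stg C K \<alpha> \<theta> D T (T - 1 - t))"
definition Ibarf where "Ibarf C K \<alpha> \<theta> D T t = stIbar (stg C K \<alpha> \<theta> D T (T - 1 - t))"
definition If where "If C K \<alpha> \<theta> D T t = stI (stg C K \<alpha> \<theta> D T (T - 1 - t))"

end

theory Submission
  imports Defs
begin

text \<open>For \<open>y \<le> I\<^sub>t\<close> every shifted argument \<open>y - z\<^sub>n\<close> (\<open>n \<ge> -1\<close>) is at most
  \<open>I\<^sub>t + \<theta> < Ibar\<^sub>t\<^sub>+\<^sub>1 \<le> s\<^sub>t\<^sub>+\<^sub>1\<close>, where \<open>V\<^sub>t\<^sub>+\<^sub>1\<close> is the constant \<open>H\<^sub>t\<^sub>+\<^sub>1(S\<^sub>t\<^sub>+\<^sub>1) + K\<^sub>t\<^sub>+\<^sub>1\<close>.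
  Hence \<open>H\<^sub>t - C\<^sub>t\<close> is constant on \<open>(-\<infinity>, I\<^sub>t]\<close>, and the claim reduces to
  \<open>C\<^sub>t(Ibar\<^sub>t - \<theta>) > C\<^sub>t(I\<^sub>t) + K\<^sub>t\<close>, which is how \<open>Ibar\<^sub>t\<close> is chosen. Coercivity of
  \<open>C\<^sub>t\<close> is needed only to make the grid maxima and minima of the recursion exist.\<close>

lemma GreatestI_finite_above:
  fixes P :: "'a::linorder \<Rightarrow> bool"
  assumes "finite {x. P x \<and> a \<le> x}" and "P a"
  shows "P (Greatest P)"
proof -
  let ?A = "{x. P x \<and> a \<le> x}"
  have "Max ?A \<in> ?A" using assms by (intro Max_in) auto
  moreover have "y \<le> Max ?A" if "P y" for y
  proof (cases "a \<le> y")
    case False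
    have "a \<le> Max ?A" using assms by (intro Max_ge) auto
    with False show ?thesis by simp
  qed (use that assms in auto)
  ultimately have "Greatest P = Max ?A" by (intro Greatest_equality) auto
  with \<open>Max ?A \<in> ?A\<close> show ?thesis by simp
qed

lemma LeastI_finite_below:
  fixes P :: "'a::linorder \<Rightarrow> bool"
  assumes "finite {x. P x \<and> x \<le> a}" and "P a"
  shows "P (Least P)"
proof -
  let ?A = "{x. P x \<and> x \<le> a}"
  have "Min ?A \<in> ?A" using assms by (intro Min_in) auto
  moreover have "Min ?A \<le> y" if "P y" for y
  proof (cases "y \<le> a")
    case False
    have "Min ?A \<le> a" using assms by (intro Min_le) auto
    with False show ?thesis by simp
  qed (use that assms in auto)
  ultimately have "Least P = Min ?A" by (intro Least_equality) auto
  with \<open>Min ?A \<in> ?A\<close> show ?thesis by simp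
qed

lemma of_int_mult_in_grid [simp]: "of_int m * \<theta> \<in> grid \<theta>"
  by (auto simp: grid_def)

lemma finite_grid_between:
  assumes "\<theta> > 0"
  shows "finite {z \<in> grid \<theta>. a \<le> z \<and> z \<le> b}"
proof -
  have "{z \<in> grid \<theta>. a \<le> z \<and> z \<le> b} \<subseteq> (\<lambda>m. of_int m * \<theta>) ` {\<lfloor>a / \<theta>\<rfloor>..\<lceil>b / \<theta>\<rceil>}"
  proof
    fix z assume "z \<in> {z \<in> grid \<theta>. a \<le> z \<and> z \<le> b}"
    then obtain m where z: "z = of_int m * \<theta>" "a \<le> of_int m * \<theta>" "of_int m * \<theta> \<le> b"
      by (auto simp: grid_def)
    have "a / \<theta> \<le> of_int m" "of_int m \<le> b / \<theta>"
      using z assms by (simp_all add: divide_le_eq le_divide_eq)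
    then have "m \<in> {\<lfloor>a / \<theta>\<rfloor>..\<lceil>b / \<theta>\<rceil>}" by auto linarith+
    then show "z \<in> (\<lambda>m. of_int m * \<theta>) ` {\<lfloor>a / \<theta>\<rfloor>..\<lceil>b / \<theta>\<rceil>}" using z by auto
  qed
  then show ?thesis by (rule finite_subset) auto
qed

lemma grid_GreatestI:
  assumes "\<theta> > 0" "z\<^sub>0 \<in> grid \<theta>" "P z\<^sub>0" "\<And>z. z \<in> grid \<theta> \<Longrightarrow> P z \<Longrightarrow> z \<le> b"
  shows "(GREATEST z. z \<in> grid \<theta> \<and> P z) \<in> grid \<theta> \<and> P (GREATEST z. z \<in> grid \<theta> \<and> P z)"
proof (rule GreatestI_finite_above[where a = z\<^sub>0])
  show "finite {z. (z \<in> grid \<theta> \<and> P z) \<and> z\<^sub>0 \<le> z}"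
    by (rule finite_subset[OF _ finite_grid_between[OF assms(1), of z\<^sub>0 b]]) (use assms in auto)
qed (use assms in auto)

lemma grid_LeastI:
  assumes "\<theta> > 0" "z\<^sub>0 \<in> grid \<theta>" "P z\<^sub>0" "\<And>z. z \<in> grid \<theta> \<Longrightarrow> P z \<Longrightarrow> b \<le> z"
  shows "(LEAST z. z \<in> grid \<theta> \<and> P z) \<in> grid \<theta> \<and> P (LEAST z. z \<in> grid \<theta> \<and> P z)"
proof (rule LeastI_finite_below[where a = z\<^sub>0])
  show "finite {z. (z \<in> grid \<theta> \<and> P z) \<and> z \<le> z\<^sub>0}"
    by (rule finite_subset[OF _ finite_grid_between[OF assms(1), of b z\<^sub>0]]) (use assms in auto)
qed (use assms in auto)

lemma grid_below:
  assumes "\<theta> > 0" shows "\<exists>z\<in>grid \<theta>. z \<le> x"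
proof
  have "of_int \<lfloor>x / \<theta>\<rfloor> \<le> x / \<theta>" by linarith
  then show "of_int \<lfloor>x / \<theta>\<rfloor> * \<theta> \<le> x" using assms by (simp add: le_divide_eq)
qed simp

lemma grid_above:
  assumes "\<theta> > 0" shows "\<exists>z\<in>grid \<theta>. x \<le> z"
proof
  have "x / \<theta> \<le> of_int \<lceil>x / \<theta>\<rceil>" by linarith
  then have "x / \<theta> * \<theta> \<le> of_int \<lceil>x / \<theta>\<rceil> * \<theta>" using assms by (intro mult_right_mono) auto
  then show "x \<le> of_int \<lceil>x / \<theta>\<rceil> * \<theta>" using assms by simp
qed simp

lemma gbelow_in_grid_less:
  assumes "\<theta> > 0"
  shows "gbelow \<theta> a \<in> grid \<theta> \<and> gbelow \<theta> a < a"
proof -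
  have "of_int (\<lceil>a / \<theta>\<rceil> - 1) < a / \<theta>" by linarith
  then have "of_int (\<lceil>a / \<theta>\<rceil> - 1) * \<theta> < a" using assms by (simp add: less_divide_eq)
  then show ?thesis
    unfolding gbelow_def by (intro grid_GreatestI[OF assms of_int_mult_in_grid[of "\<lceil>a / \<theta>\<rceil> - 1"], where b = a]) auto
qed

lemma grid_less_imp_le_minus:
  assumes "z \<in> grid \<theta>" "w \<in> grid \<theta>" "\<theta> > 0" "w < z"
  shows "w \<le> z - \<theta>"
proof -
  obtain m n where mn: "z = of_int m * \<theta>" "w = of_int n * \<theta>" using assms by (auto simp: grid_def)
  with assms have "n < m" by (simp add: mult_less_cancel_right)
  then have "of_int n * \<theta> \<le> (of_int m - 1) * \<theta>" using assms(3) by (intro mult_right_mono) auto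
  with mn show ?thesis by (simp add: algebra_simps)
qed

lemma coercive_exceeds:
  fixes f :: "real \<Rightarrow> real"
  assumes "filterlim f at_top at_infinity"
  obtains r where "\<And>x. r \<le> \<bar>x\<bar> \<Longrightarrow> B < f x"
proof -
  have "\<forall>\<^sub>F x in at_infinity. B < f x" using assms filterlim_at_top_dense by blast
  then show ?thesis using that unfolding eventually_at_infinity by auto
qed

lemma SU_in_grid_ge_CM:
  assumes "\<theta> > 0" and "filterlim (C t) at_top at_infinity"
  shows "SU C K \<theta> t \<in> grid \<theta> \<and> CM C t \<le> SU C K \<theta> t"
proof -
  obtain r where r: "\<And>x. r \<le> \<bar>x\<bar> \<Longrightarrow> C t (gbelow \<theta> (CM C t)) + K t < C t x"
    using coercive_exceeds[OF assms(2)] by blast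
  obtain z where z: "z \<in> grid \<theta>" "max (CM C t) \<bar>r\<bar> \<le> z" using grid_above[OF assms(1)] by blast
  have "SU C K \<theta> t \<in> grid \<theta> \<and> CM C t \<le> SU C K \<theta> t
      \<and> C t (gbelow \<theta> (CM C t)) + K t < C t (SU C K \<theta> t)"
    unfolding SU_def by (rule grid_LeastI[OF assms(1) z(1), where b = "CM C t"]) (use z r in auto)
  then show ?thesis by blast
qed

declare stg.simps(2) [simp del]

locale grid_stages =
  fixes C :: "nat \<Rightarrow> real \<Rightarrow> real" and K :: "nat \<Rightarrow> real" and \<alpha> \<theta> :: real
    and D :: "nat \<Rightarrow> real measure" and T :: nat
  assumes T_ge_2: "2 \<le> T" and theta_pos: "\<theta> > 0"
    and K_nonneg: "\<And>t. t < T \<Longrightarrow> 0 \<le> K t"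
    and coercive: "\<And>t. t < T \<Longrightarrow> filterlim (C t) at_top at_infinity"
begin

abbreviation st :: "nat \<Rightarrow> stage" where
  "st \<equiv> stg C K \<alpha> \<theta> D T"

lemma stI_st_Suc:
  "stI (st (Suc k)) = gbelow \<theta> (min (stIbar (st k) - \<theta>) (CM C (T - 2 - k)))"
  by (simp add: stg.simps Let_def)

lemma stIbar_st_Suc:
  "stIbar (st (Suc k)) = (GREATEST z. z \<in> grid \<theta> \<and> z \<le> stI (st (Suc k))
      \<and> C (T - 2 - k) z > C (T - 2 - k) (stI (st (Suc k))) + K (T - 2 - k)) + \<theta>"
  by (simp add: stg.simps Let_def)

lemma stS_st_Suc:
  "stS (st (Suc k)) = (GREATEST z. z \<in> grid \<theta> \<and> stI (st (Suc k)) \<le> z \<and> z \<le> SU C K \<theta> (T - 2 - k)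
      \<and> (\<forall>w. w \<in> grid \<theta> \<and> stI (st (Suc k)) \<le> w \<and> w \<le> SU C K \<theta> (T - 2 - k)
            \<longrightarrow> stH (st (Suc k)) z \<le> stH (st (Suc k)) w))"
  by (simp add: stg.simps Let_def)

lemma sts_st_Suc:
  "sts (st (Suc k)) = (if K (T - 2 - k) = 0 then stS (st (Suc k))
     else (LEAST z. z \<in> grid \<theta> \<and> stIbar (st (Suc k)) \<le> z \<and> z \<le> stS (st (Suc k))
            \<and> stH (st (Suc k)) z \<le> stH (st (Suc k)) (stS (st (Suc k))) + K (T - 2 - k)))"
  by (simp add: stg.simps Let_def)

lemma stH_st_Suc:
  "stH (st (Suc k)) y = C (T - 2 - k) y + \<alpha> * (\<Sum>j.
     (if y - of_int (int j - 1) * \<theta> < sts (st k) then stH (st k) (stS (st k)) + K (Suc (T - 2 - k))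
      else stH (st k) (y - of_int (int j - 1) * \<theta>)) * fmass D \<theta> (T - 2 - k) (int j - 1))"
  by (simp only: stg.simps Let_def stage.select_convs)

lemma stI_in_grid_less:
  "stI (st (Suc k)) \<in> grid \<theta> \<and> stI (st (Suc k)) < min (stIbar (st k) - \<theta>) (CM C (T - 2 - k))"
  unfolding stI_st_Suc by (rule gbelow_in_grid_less[OF theta_pos])

lemma stIbar_minus_theta_gap:
  "stIbar (st (Suc k)) - \<theta> \<in> grid \<theta> \<and> stIbar (st (Suc k)) - \<theta> < stI (st (Suc k))
     \<and> C (T - 2 - k) (stIbar (st (Suc k)) - \<theta>) > C (T - 2 - k) (stI (st (Suc k))) + K (T - 2 - k)"
proof -
  define t where "t = T - 2 - k"
  define I where "I = stI (st (Suc k))"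
  define Ib where "Ib = stIbar (st (Suc k)) - \<theta>"
  have t: "t < T" using T_ge_2 unfolding t_def by linarith
  obtain r where r: "\<And>x. r \<le> \<bar>x\<bar> \<Longrightarrow> C t I + K t < C t x"
    using coercive_exceeds[OF coercive[OF t]] by blast
  obtain z where z: "z \<in> grid \<theta>" "z \<le> min I (- \<bar>r\<bar>)" using grid_below[OF theta_pos] by blast
  have "Ib \<in> grid \<theta> \<and> Ib \<le> I \<and> C t I + K t < C t Ib"
    unfolding Ib_def stIbar_st_Suc t_def[symmetric] I_def[symmetric] add_diff_cancel_right'
    by (rule grid_GreatestI[OF theta_pos z(1), where b = I]) (use z r in auto)
  moreover have "K t \<ge> 0" using K_nonneg[OF t] .
  ultimately have "Ib \<in> grid \<theta> \<and> Ib < I \<and> C t I + K t < C t Ib"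
    by (cases "Ib = I") auto
  then show ?thesis unfolding Ib_def I_def t_def .
qed

lemma stIbar_le_stI: "stIbar (st (Suc k)) \<le> stI (st (Suc k))"
  using grid_less_imp_le_minus[OF _ _ theta_pos] stI_in_grid_less[of k] stIbar_minus_theta_gap[of k]
  by force

lemma stS_in_grid_ge_stI: "stS (st (Suc k)) \<in> grid \<theta> \<and> stI (st (Suc k)) \<le> stS (st (Suc k))"
proof -
  define t where "t = T - 2 - k"
  define I where "I = stI (st (Suc k))"
  define H where "H = stH (st (Suc k))"
  have t: "t < T" using T_ge_2 unfolding t_def by linarith
  have I: "I \<in> grid \<theta>" "I \<le> SU C K \<theta> t"
    using stI_in_grid_less[of k] SU_in_grid_ge_CM[where C = C and t = t and K = K, OF theta_pos coercive[OF t]]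
    unfolding I_def t_def by auto
  let ?B = "{z \<in> grid \<theta>. I \<le> z \<and> z \<le> SU C K \<theta> t}"
  have "finite ?B" "?B \<noteq> {}" using finite_grid_between[OF theta_pos] I by auto
  then obtain m where "is_arg_min H (\<lambda>z. z \<in> ?B) m" using ex_is_arg_min_if_finite by blast
  then have m: "m \<in> ?B" "\<forall>w\<in>?B. H m \<le> H w" by (auto simp: is_arg_min_def not_less)
  let ?S = "GREATEST z. z \<in> grid \<theta> \<and> I \<le> z \<and> z \<le> SU C K \<theta> t
      \<and> (\<forall>w. w \<in> grid \<theta> \<and> I \<le> w \<and> w \<le> SU C K \<theta> t \<longrightarrow> H z \<le> H w)"
  have "?S \<in> grid \<theta> \<and> I \<le> ?S \<and> ?S \<le> SU C K \<theta> t
      \<and> (\<forall>w. w \<in> grid \<theta> \<and> I \<le> w \<and> w \<le> SU C K \<theta> t \<longrightarrow> H ?S \<le> H w)"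
    by (rule grid_GreatestI[where z\<^sub>0 = m and b = "SU C K \<theta> t", OF theta_pos]) (use m in auto)
  then show ?thesis
    unfolding stS_st_Suc t_def[symmetric] I_def[symmetric] H_def[symmetric] by blast
qed

lemma stIbar_le_sts: "stIbar (st k) \<le> sts (st k)"
proof (cases k)
  case 0
  then show ?thesis by simp
next
  case (Suc k')
  define q where "q = st (Suc k')"
  define t where "t = T - 2 - k'"
  have S: "stS q \<in> grid \<theta>" "stIbar q \<le> stS q"
    using stIbar_le_stI[of k'] stS_in_grid_ge_stI[of k'] unfolding q_def by auto
  define H where "H = stH q"
  let ?s = "LEAST z. z \<in> grid \<theta> \<and> stIbar q \<le> z \<and> z \<le> stS q \<and> H z \<le> H (stS q) + K t"
  have "K t \<ge> 0" using T_ge_2 unfolding t_def by (intro K_nonneg) linarith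
  then have "?s \<in> grid \<theta> \<and> stIbar q \<le> ?s \<and> ?s \<le> stS q \<and> H ?s \<le> H (stS q) + K t"
    by (intro grid_LeastI[OF theta_pos S(1), where b = "stIbar q"]) (use S in auto)
  then show ?thesis
    unfolding Suc q_def[symmetric] sts_st_Suc[of k', folded q_def t_def H_def] using S by auto
qed

lemma stH_left_of_stI:
  assumes "y \<le> stI (st (Suc k))"
  shows "stH (st (Suc k)) y = C (T - 2 - k) y
    + \<alpha> * (\<Sum>j. (stH (st k) (stS (st k)) + K (Suc (T - 2 - k))) * fmass D \<theta> (T - 2 - k) (int j - 1))"
proof -
  have "y - of_int (int j - 1) * \<theta> < sts (st k)" for j :: nat
  proof -
    have "- (of_int (int j - 1) * \<theta>) \<le> \<theta>" using theta_pos by (simp add: algebra_simps)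
    then show ?thesis using assms stI_in_grid_less[of k] stIbar_le_sts[of k] by linarith
  qed
  then show ?thesis unfolding stH_st_Suc by simp
qed

lemma stH_Ibar_gap:
  "stH (st (Suc k)) (stIbar (st (Suc k)) - \<theta>) > stH (st (Suc k)) (stI (st (Suc k))) + K (T - 2 - k)"
  using stIbar_minus_theta_gap[of k]
    stH_left_of_stI[of "stIbar (st (Suc k)) - \<theta>" k] stH_left_of_stI[of "stI (st (Suc k))" k]
  by auto

end

theorem lemma4p4:
  fixes T :: nat and \<alpha> \<theta> :: real and c K :: "nat \<Rightarrow> real"
    and G :: "nat \<Rightarrow> real \<Rightarrow> real" and D :: "nat \<Rightarrow> real measure"
  assumes "T \<ge> 2" and "0 < \<alpha>" and "\<alpha> \<le> 1" and "\<theta> > 0"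
    and "\<And>t. t < T \<Longrightarrow> K t \<ge> 0"
    and "\<And>t. t < T \<Longrightarrow> prob_space (D t)"
    and "\<And>t. t < T \<Longrightarrow> sets (D t) = sets borel"
    and "\<And>t. t < T \<Longrightarrow> (AE x in D t. x \<ge> 0)"
    and "\<And>t. t < T \<Longrightarrow> integrable (D t) (\<lambda>x. x)"
    and "\<And>t. t < T \<Longrightarrow> convex_on UNIV (Cfun \<alpha> c G D t)"
    and "\<And>t. t < T \<Longrightarrow> filterlim (Cfun \<alpha> c G D t) at_top at_infinity"
    and "\<And>t. t + 2 \<le> T \<Longrightarrow> K t \<ge> \<alpha> * K (Suc t)"
    and "t + 2 \<le> T"
  shows "Hf (Cfun \<alpha> c G D) K \<alpha> \<theta> D T t (Ibarf (Cfun \<alpha> c G D) K \<alpha> \<theta> D T t - \<theta>)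
         > Hf (Cfun \<alpha> c G D) K \<alpha> \<theta> D T t (If (Cfun \<alpha> c G D) K \<alpha> \<theta> D T t) + K t"
proof -
  interpret grid_stages "Cfun \<alpha> c G D" K \<alpha> \<theta> D T
    using assms(1,4,5,11) by unfold_locales auto
  define k where "k = T - 2 - t"
  have "T - 1 - t = Suc k" "T - 2 - k = t" using assms(13) unfolding k_def by auto
  then show ?thesis
    using stH_Ibar_gap[of k] unfolding Hf_def Ibarf_def If_def by simp
qed

end
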